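(* Let $G$ be a finite group, let $A$ be a subgroup of $G$, and let $W$ be a subgroup of a finitely generated group $F$ such that the subgroup $WF'$ has infinite index in $F$. Then the order $|N(A)|$ of the normaliser of $A$ in $G$ divides each of the following numbers: a) the number of homomorphisms $\varphi: F\to G$ such that the restriction of $\varphi$ to $W$ is injective and $\varphi(W)\subseteq A$; b) the number of homomorphisms $\varphi: F\to G$ such that the restriction of $\varphi$ to $W$ is injective and $\varphi(W)=A$.
   Context: $F'$ denotes the commutator subgroup of $F$; $N(A)$ is the normaliser of $A$ in $G$. *)

theory Defs
  imports "HOL-Algebra.Algebra"
begin

definition finitely_generated_group :: "('a, 'b) monoid_scheme \<Rightarrow> bool" where
  "finitely_generated_group F \<longleftrightarrow>
     group F \<and> (\<exists>S. finite S \<and> S \<subseteq> carrier F \<and> generate F S = carrier F)"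

end

theory Submission
  imports Defs
begin

text \<open>
  Since \<open>WF'\<close> has infinite index in the finitely generated group \<open>F\<close>, the abelian group
  \<open>F/WF'\<close> is infinite and finitely generated, hence maps onto \<open>\<int>\<close>: there is a homomorphism
  \<open>\<psi> : F \<rightarrow> \<int>\<close> vanishing on \<open>W\<close> with \<open>\<psi> t = 1\<close>. With \<open>K = ker \<psi> \<supseteq> W\<close> we have
  \<open>F = K \<rtimes> \<langle>t\<rangle>\<close>, so a homomorphism \<open>\<phi> : F \<rightarrow> G\<close> is given by \<open>\<rho> = \<phi>|K\<close> together with a
  value \<open>\<phi> t\<close> that conjugates \<open>\<rho>\<close> correctly; for fixed \<open>\<rho>\<close> these values form a coset of the
  centraliser \<open>C(\<rho> K)\<close>. Thus the number of homomorphisms is \<open>\<Sum>\<^sub>\<rho> |C(\<rho> K)|\<close>. The normaliser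
  \<open>N(A)\<close> acts on the restrictions \<open>\<rho>\<close> by conjugation, preserving the conditions on \<open>W\<close>, with
  stabiliser \<open>N(A) \<inter> C(\<rho> K)\<close> and with \<open>|C(\<rho> K)|\<close> constant on orbits, so each orbit contributes
  \<open>[N(A) : N(A) \<inter> C(\<rho> K)] \<cdot> |C(\<rho> K)|\<close>, a multiple of \<open>|N(A)|\<close>.
\<close>

section \<open>Orbit counting\<close>

context group
begin

lemma card_orbit_mult_card_stabilizer:
  assumes H: "subgroup H G" and fin: "finite H"
    and one: "\<And>r. r \<in> R \<Longrightarrow> act \<one> r = r"
    and mult: "\<And>n m r. n \<in> H \<Longrightarrow> m \<in> H \<Longrightarrow> r \<in> R \<Longrightarrow> act (n \<otimes> m) r = act n (act m r)"
    and r: "r \<in> R"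
  shows "card H = card ((\<lambda>n. act n r) ` H) * card {n \<in> H. act n r = r}"
proof -
  let ?O = "(\<lambda>n. act n r) ` H"
  let ?S = "{n \<in> H. act n r = r}"
  let ?fibre = "\<lambda>y. {n \<in> H. act n r = y}"
  have Hc: "H \<subseteq> carrier G" using subgroup.subset[OF H] .
  have "card H = card (\<Union>y\<in>?O. ?fibre y)"
    by (rule arg_cong[where f = card]) auto
  also have "\<dots> = (\<Sum>y\<in>?O. card (?fibre y))"
    using fin by (intro card_UN_disjoint) auto
  also have "\<dots> = (\<Sum>y\<in>?O. card ?S)"
  proof (rule sum.cong[OF refl])
    fix y assume "y \<in> ?O"
    then obtain m where m: "m \<in> H" "y = act m r" by auto
    have mc: "m \<in> carrier G" and im: "inv m \<in> H"
      using m Hc subgroup.m_inv_closed[OF H] by auto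
    have "bij_betw ((\<otimes>) m) ?S (?fibre y)"
    proof (rule bij_betw_byWitness[where f' = "(\<otimes>) (inv m)"])
      show "(\<otimes>) m ` ?S \<subseteq> ?fibre y"
        using m mult r subgroup.m_closed[OF H] by auto
      have "act (inv m \<otimes> n) r = r" if "n \<in> H" "act n r = y" for n
        using that m im mult[OF im _ r] mult[OF im m(1) r] one[OF r] mc by simp
      then show "(\<otimes>) (inv m) ` ?fibre y \<subseteq> ?S"
        using im subgroup.m_closed[OF H] by auto
    qed (use Hc mc in \<open>auto simp: m_assoc[symmetric]\<close>)
    then show "card (?fibre y) = card ?S" by (simp add: bij_betw_same_card)
  qed
  finally show ?thesis by simp
qed

lemma invariant_diff_orbit:
  assumes H: "subgroup H G"
    and one: "\<And>r. r \<in> R \<Longrightarrow> act \<one> r = r"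
    and mult: "\<And>n m r. n \<in> H \<Longrightarrow> m \<in> H \<Longrightarrow> r \<in> R \<Longrightarrow> act (n \<otimes> m) r = act n (act m r)"
    and closed: "\<And>n r. n \<in> H \<Longrightarrow> r \<in> R \<Longrightarrow> act n r \<in> R"
    and r: "r \<in> R" and n: "n \<in> H" and x: "x \<in> R - (\<lambda>m. act m r) ` H"
  shows "act n x \<in> R - (\<lambda>m. act m r) ` H"
proof -
  have "act n x \<notin> (\<lambda>m. act m r) ` H"
  proof
    assume "act n x \<in> (\<lambda>m. act m r) ` H"
    then obtain m where m: "m \<in> H" "act n x = act m r" by auto
    have im: "inv n \<in> H" and nc: "n \<in> carrier G"
      using subgroup.m_inv_closed[OF H n] subgroup.subset[OF H] n by auto
    have "x = act (inv n \<otimes> n) x" using one x nc by simp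
    also have "\<dots> = act (inv n \<otimes> m) r" using mult[OF im n] mult[OF im m(1) r] m x by simp
    finally show False using x subgroup.m_closed[OF H im m(1)] by blast
  qed
  then show ?thesis using closed n x by blast
qed

lemma card_dvd_sum_invariant_weights:
  assumes H: "subgroup H G" and fin: "finite H" and fin_R: "finite R"
    and closed: "\<And>n r. n \<in> H \<Longrightarrow> r \<in> R \<Longrightarrow> act n r \<in> R"
    and one: "\<And>r. r \<in> R \<Longrightarrow> act \<one> r = r"
    and mult: "\<And>n m r. n \<in> H \<Longrightarrow> m \<in> H \<Longrightarrow> r \<in> R \<Longrightarrow> act (n \<otimes> m) r = act n (act m r)"
    and invariant: "\<And>n r. n \<in> H \<Longrightarrow> r \<in> R \<Longrightarrow> w (act n r) = w r"
    and stabilizer_dvd: "\<And>r. r \<in> R \<Longrightarrow> card {n \<in> H. act n r = r} dvd w r"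
  shows "card H dvd sum w R"
proof -
  have "card H dvd sum w R'" if "R' \<subseteq> R" "\<And>n r. n \<in> H \<Longrightarrow> r \<in> R' \<Longrightarrow> act n r \<in> R'" for R'
    using finite_subset[OF that(1) fin_R] that
  proof (induction R' rule: finite_psubset_induct)
    case (psubset R')
    show ?case
    proof (cases "R' = {}")
      case False
      then obtain r where r: "r \<in> R'" by auto
      let ?O = "(\<lambda>n. act n r) ` H"
      have rR: "r \<in> R" using r psubset.prems by auto
      have "r \<in> ?O" using one[OF rR] subgroup.one_closed[OF H] by (metis image_eqI)
      moreover have "act n x \<in> R' - ?O" if "n \<in> H" "x \<in> R' - ?O" for n x
      proof (rule invariant_diff_orbit[where R = R' and act = act, OF H _ _ _ r that])
        show "act \<one> y = y" if "y \<in> R'" for y using one that psubset.prems(1) by blast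
        show "act (n \<otimes> m) y = act n (act m y)" if "n \<in> H" "m \<in> H" "y \<in> R'" for n m y
          using mult that psubset.prems(1) by blast
      qed (use psubset.prems(2) in blast)
      ultimately have IH: "card H dvd sum w (R' - ?O)"
        using psubset.IH[of "R' - ?O"] r psubset.prems(1) by blast
      obtain q where q: "w r = card {n \<in> H. act n r = r} * q"
        using stabilizer_dvd[OF rR] by (meson dvdE)
      have "card H = card ?O * card {n \<in> H. act n r = r}"
        using card_orbit_mult_card_stabilizer[OF H fin, of R' act r] one mult r psubset.prems(1)
        by (meson subsetD)
      moreover have "sum w ?O = (\<Sum>_\<in>?O. w r)"
        using invariant[OF _ rR] by (intro sum.cong) auto
      ultimately have orbit_sum: "sum w ?O = card H * q" using q by simp
      have "?O \<subseteq> R'" using psubset.prems(2) r by blast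
      then have "sum w R' = sum w ?O + sum w (R' - ?O)"
        using psubset.hyps by (metis add.commute sum.subset_diff)
      then show ?thesis using IH orbit_sum by simp
    qed simp
  qed
  then show ?thesis using closed by blast
qed

lemma card_subgroup_dvd:
  assumes I: "subgroup I G" and J: "subgroup J G" and "I \<subseteq> J"
  shows "card I dvd card J"
proof -
  interpret J: group "G\<lparr>carrier := J\<rparr>" using subgroup_imp_group[OF J] .
  have "card (rcosets\<^bsub>G\<lparr>carrier := J\<rparr>\<^esub> I) * card I = card J"
    using J.lagrange[OF subgroup_incl[OF I J \<open>I \<subseteq> J\<close>]] by (simp add: order_def)
  then show ?thesis by (metis dvd_triv_right)
qed

section \<open>Conjugation and centralizers\<close>

lemma inv_mult_cancel_left [simp]:
  "x \<in> carrier G \<Longrightarrow> y \<in> carrier G \<Longrightarrow> inv x \<otimes> (x \<otimes> y) = y"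
  "x \<in> carrier G \<Longrightarrow> y \<in> carrier G \<Longrightarrow> x \<otimes> (inv x \<otimes> y) = y"
  by (simp_all add: m_assoc[symmetric])

definition conjugate :: "'a \<Rightarrow> 'a \<Rightarrow> 'a" where
  "conjugate g x = g \<otimes> x \<otimes> inv g"

definition centralizer :: "'a set \<Rightarrow> 'a set" where
  "centralizer S = {c \<in> carrier G. \<forall>y\<in>S. c \<otimes> y = y \<otimes> c}"

lemma conjugate_closed [simp]: "g \<in> carrier G \<Longrightarrow> x \<in> carrier G \<Longrightarrow> conjugate g x \<in> carrier G"
  unfolding conjugate_def by simp

lemma conjugate_one [simp]: "x \<in> carrier G \<Longrightarrow> conjugate \<one> x = x"
  unfolding conjugate_def by simp

lemma conjugate_mult:
  "g \<in> carrier G \<Longrightarrow> h \<in> carrier G \<Longrightarrow> x \<in> carrier G \<Longrightarrow>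
    conjugate (g \<otimes> h) x = conjugate g (conjugate h x)"
  unfolding conjugate_def by (simp add: m_assoc inv_mult_group)

lemma conjugate_mult_distrib:
  "g \<in> carrier G \<Longrightarrow> x \<in> carrier G \<Longrightarrow> y \<in> carrier G \<Longrightarrow>
    conjugate g (x \<otimes> y) = conjugate g x \<otimes> conjugate g y"
  unfolding conjugate_def by (simp add: m_assoc)

lemma conjugate_inv_cancel [simp]:
  "g \<in> carrier G \<Longrightarrow> x \<in> carrier G \<Longrightarrow> conjugate (inv g) (conjugate g x) = x"
  "g \<in> carrier G \<Longrightarrow> x \<in> carrier G \<Longrightarrow> conjugate g (conjugate (inv g) x) = x"
  unfolding conjugate_def by (simp_all add: m_assoc)

lemma conjugate_mult_right: "g \<in> carrier G \<Longrightarrow> x \<in> carrier G \<Longrightarrow> conjugate g x \<otimes> g = g \<otimes> x"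
  unfolding conjugate_def by (simp add: m_assoc)

lemma conjugate_eq_iff_commute:
  "g \<in> carrier G \<Longrightarrow> x \<in> carrier G \<Longrightarrow> conjugate g x = x \<longleftrightarrow> g \<otimes> x = x \<otimes> g"
proof
  assume "g \<in> carrier G" "x \<in> carrier G" "conjugate g x = x"
  then show "g \<otimes> x = x \<otimes> g" using conjugate_mult_right by metis
next
  assume "g \<in> carrier G" "x \<in> carrier G" "g \<otimes> x = x \<otimes> g"
  then show "conjugate g x = x" unfolding conjugate_def by (simp add: m_assoc)
qed

lemma conjugate_eq_conjugate_iff:
  assumes "a \<in> carrier G" "b \<in> carrier G" "y \<in> carrier G"
  shows "conjugate a y = conjugate b y \<longleftrightarrow> conjugate (inv b \<otimes> a) y = y"
proof -
  have "conjugate (inv b \<otimes> a) y = conjugate (inv b) (conjugate a y)"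
    using assms by (simp add: conjugate_mult)
  then show ?thesis using assms conjugate_inv_cancel by (metis conjugate_closed inv_closed)
qed

lemma inj_on_conjugate: "g \<in> carrier G \<Longrightarrow> inj_on (conjugate g) (carrier G)"
  by (metis conjugate_inv_cancel(1) inj_onI)

lemma conjugate_image_normalizer:
  assumes "A \<subseteq> carrier G" "g \<in> normalizer G A"
  shows "conjugate g ` A = A"
proof -
  have "g <# A #> inv g = A" and "g \<in> carrier G"
    using assms unfolding normalizer_def stabilizer_def by auto
  moreover have "conjugate g ` A = g <# A #> inv g"
    unfolding conjugate_def l_coset_def r_coset_def by auto
  ultimately show ?thesis by simp
qed

lemma centralizer_subgroup:
  assumes S: "S \<subseteq> carrier G"
  shows "subgroup (centralizer S) G"
proof (rule subgroupI)
  fix a b assume a: "a \<in> centralizer S"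
  then have ac: "a \<in> carrier G" unfolding centralizer_def by auto
  have "inv a \<otimes> y = y \<otimes> inv a" if y: "y \<in> S" for y
  proof -
    have "conjugate a y = y" using a y S conjugate_eq_iff_commute ac unfolding centralizer_def by auto
    then have "conjugate (inv a) y = y" using y S ac by (metis conjugate_inv_cancel(1) subsetD)
    then show ?thesis using y S ac conjugate_eq_iff_commute[of "inv a" y] by auto
  qed
  then show "inv a \<in> centralizer S" using ac unfolding centralizer_def by simp
  assume "b \<in> centralizer S"
  then show "a \<otimes> b \<in> centralizer S"
    using a S unfolding centralizer_def by (auto simp: m_assoc subset_iff) (simp add: m_assoc[symmetric])
qed (use S in \<open>auto simp: centralizer_def intro!: exI[of _ \<one>]\<close>)

lemma conjugate_mem_centralizer:
  assumes "c \<in> centralizer S" "S \<subseteq> carrier G" "g \<in> carrier G"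
  shows "conjugate g c \<in> centralizer (conjugate g ` S)"
  using assms unfolding centralizer_def by (auto simp: conjugate_mult_distrib[symmetric] subset_iff)

lemma centralizer_conjugate_image:
  assumes g: "g \<in> carrier G" and S: "S \<subseteq> carrier G"
  shows "centralizer (conjugate g ` S) = conjugate g ` centralizer S"
proof
  show "centralizer (conjugate g ` S) \<subseteq> conjugate g ` centralizer S"
  proof
    fix c assume c: "c \<in> centralizer (conjugate g ` S)"
    have "conjugate (inv g) ` conjugate g ` S = S"
      using g S by (force simp: image_image)
    moreover have "conjugate g ` S \<subseteq> carrier G" using g S by auto
    ultimately have "conjugate (inv g) c \<in> centralizer S"
      using conjugate_mem_centralizer[OF c _ inv_closed[OF g]] by simp
    moreover have "c = conjugate g (conjugate (inv g) c)" using c g unfolding centralizer_def by simp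
    ultimately show "c \<in> conjugate g ` centralizer S" by blast
  qed
qed (use conjugate_mem_centralizer g S in blast)

lemma card_centralizer_conjugate_image:
  "g \<in> carrier G \<Longrightarrow> S \<subseteq> carrier G \<Longrightarrow> card (centralizer (conjugate g ` S)) = card (centralizer S)"
proof -
  assume "g \<in> carrier G" "S \<subseteq> carrier G"
  moreover have "centralizer S \<subseteq> carrier G" by (auto simp: centralizer_def)
  ultimately show ?thesis
    using centralizer_conjugate_image card_image inj_on_conjugate inj_on_subset by metis
qed

lemma commutator_in_derived:
  "x \<in> carrier G \<Longrightarrow> y \<in> carrier G \<Longrightarrow> x \<otimes> y \<otimes> inv x \<otimes> inv y \<in> derived G (carrier G)"
  unfolding derived_def by (rule generate.incl) blast

lemma conjugate_eq_commutator_mult: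
  "x \<in> carrier G \<Longrightarrow> h \<in> carrier G \<Longrightarrow> conjugate x h = (x \<otimes> h \<otimes> inv x \<otimes> inv h) \<otimes> h"
  unfolding conjugate_def by (simp add: m_assoc)

lemma conjugate_in_subgroup_above_derived:
  assumes H: "subgroup H G" and D: "derived G (carrier G) \<subseteq> H" and x: "x \<in> carrier G" and h: "h \<in> H"
  shows "conjugate x h \<in> H"
proof -
  have hc: "h \<in> carrier G" using h subgroup.subset[OF H] by auto
  then show ?thesis
    using conjugate_eq_commutator_mult[OF x hc] commutator_in_derived[OF x hc] D
      subgroup.m_closed[OF H _ h] by auto
qed

end

lemma (in group_hom) hom_conjugate:
  "x \<in> carrier G \<Longrightarrow> y \<in> carrier G \<Longrightarrow> h (G.conjugate x y) = H.conjugate (h x) (h y)"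
  unfolding G.conjugate_def H.conjugate_def by simp

section \<open>Homomorphisms onto the integers\<close>

context group
begin

definition additive_on :: "'a set \<Rightarrow> ('a \<Rightarrow> int) \<Rightarrow> bool" where
  "additive_on H \<psi> \<longleftrightarrow> (\<forall>x\<in>H. \<forall>y\<in>H. \<psi> (x \<otimes> y) = \<psi> x + \<psi> y)"

lemma additive_on_one:
  assumes "subgroup H G" "additive_on H \<psi>" shows "\<psi> \<one> = 0"
  using assms subgroup.one_closed[OF assms(1)] unfolding additive_on_def
  by (metis add_cancel_right_right one_closed r_one)

lemma additive_on_inv:
  assumes H: "subgroup H G" and \<psi>: "additive_on H \<psi>" and h: "h \<in> H"
  shows "\<psi> (inv h) = - \<psi> h"
proof -
  have "\<psi> (h \<otimes> inv h) = \<psi> h + \<psi> (inv h)"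
    using \<psi> h subgroup.m_inv_closed[OF H h] unfolding additive_on_def by blast
  then show ?thesis using h subgroup.subset[OF H] additive_on_one[OF H \<psi>] by auto
qed

lemma additive_on_int_pow:
  assumes H: "subgroup H G" and \<psi>: "additive_on H \<psi>" and h: "h \<in> H"
  shows "\<psi> (h [^] (j::int)) = j * \<psi> h"
proof (induction j rule: int_induct[where k = 0])
  have hc: "h \<in> carrier G" using h subgroup.subset[OF H] by auto
  have hj: "h [^] (i::int) \<in> H" for i using subgroup_int_pow_closed[OF H h] .
  {
    case base
    show ?case using additive_on_one[OF H \<psi>] by simp
  next
    case (step1 i)
    have "h [^] (i + 1) = h [^] i \<otimes> h" using int_pow_mult[OF hc, of i 1] hc by simp
    then show ?case using step1 \<psi> hj h unfolding additive_on_def by (simp add: distrib_right)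
  next
    case (step2 i)
    have "h [^] (i - 1) = h [^] i \<otimes> inv h"
      using int_pow_mult[OF hc, of i "-1"] int_pow_neg[OF hc, of 1] hc by simp
    then show ?case
      using step2 \<psi> hj subgroup.m_inv_closed[OF H h] additive_on_inv[OF H \<psi> h]
      unfolding additive_on_def by (simp add: left_diff_distrib)
  }
qed

lemma additive_on_conjugate:
  assumes H: "subgroup H G" and D: "derived G (carrier G) \<subseteq> N" and "N \<subseteq> H"
    and \<psi>: "additive_on H \<psi>" and N0: "\<forall>n\<in>N. \<psi> n = 0" and x: "x \<in> carrier G" and h: "h \<in> H"
  shows "\<psi> (conjugate x h) = \<psi> h"
proof -
  have hc: "h \<in> carrier G" using h subgroup.subset[OF H] by auto
  have "x \<otimes> h \<otimes> inv x \<otimes> inv h \<in> N" using commutator_in_derived[OF x hc] D by auto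
  then show ?thesis
    using assms conjugate_eq_commutator_mult[OF x hc] unfolding additive_on_def by (metis add_0 subsetD)
qed

definition adjoin :: "'a set \<Rightarrow> 'a \<Rightarrow> 'a set" where
  "adjoin H s = {h \<otimes> s [^] (j::int) | h j. h \<in> H}"

lemma mult_adjoin_normal_form:
  assumes "h \<in> carrier G" "h' \<in> carrier G" "s \<in> carrier G"
  shows "(h \<otimes> s [^] (i::int)) \<otimes> (h' \<otimes> s [^] (j::int)) = (h \<otimes> conjugate (s [^] i) h') \<otimes> s [^] (i + j)"
  using assms unfolding conjugate_def by (simp add: m_assoc int_pow_mult)

lemma subset_adjoin:
  assumes "subgroup H G" shows "H \<subseteq> adjoin H s"
proof
  fix h assume "h \<in> H"
  then have "h = h \<otimes> s [^] (0::int)" using subgroup.mem_carrier[OF assms] by simp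
  then show "h \<in> adjoin H s" using \<open>h \<in> H\<close> unfolding adjoin_def by blast
qed

lemma adjoin_subgroup:
  assumes H: "subgroup H G" and D: "derived G (carrier G) \<subseteq> H" and s: "s \<in> carrier G"
  shows "subgroup (adjoin H s) G"
proof (rule subgroupI)
  have Hc: "H \<subseteq> carrier G" using subgroup.subset[OF H] .
  show "adjoin H s \<subseteq> carrier G" unfolding adjoin_def using Hc s by auto
  show "adjoin H s \<noteq> {}" using subset_adjoin[OF H] subgroup.one_closed[OF H] by blast
  fix x y assume "x \<in> adjoin H s"
  then obtain h i where h: "h \<in> H" and x: "x = h \<otimes> s [^] (i::int)" unfolding adjoin_def by blast
  have hc: "h \<in> carrier G" using h Hc by auto
  have "inv x = conjugate (s [^] (- i)) (inv h) \<otimes> s [^] (- i)"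
    using x hc s unfolding conjugate_def by (simp add: m_assoc inv_mult_group int_pow_neg)
  moreover have "conjugate (s [^] (- i)) (inv h) \<in> H"
    using conjugate_in_subgroup_above_derived[OF H D _ subgroup.m_inv_closed[OF H h]] s by simp
  ultimately show "inv x \<in> adjoin H s" unfolding adjoin_def by blast
  assume "y \<in> adjoin H s"
  then obtain h' j where h': "h' \<in> H" and y: "y = h' \<otimes> s [^] (j::int)" unfolding adjoin_def by blast
  have "x \<otimes> y = (h \<otimes> conjugate (s [^] i) h') \<otimes> s [^] (i + j)"
    using mult_adjoin_normal_form[OF hc _ s] h' Hc x y by auto
  moreover have "h \<otimes> conjugate (s [^] i) h' \<in> H"
    using subgroup.m_closed[OF H h conjugate_in_subgroup_above_derived[OF H D _ h']] s by simp
  ultimately show "x \<otimes> y \<in> adjoin H s" unfolding adjoin_def by blast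
qed

lemma generate_insert_eq_adjoin:
  assumes S: "S \<subseteq> carrier G" and D: "derived G (carrier G) \<subseteq> generate G S" and s: "s \<in> carrier G"
  shows "generate G (insert s S) = adjoin (generate G S) s"
proof
  have H: "subgroup (generate G S) G" using generate_is_subgroup[OF S] .
  have "s \<in> adjoin (generate G S) s"
    unfolding adjoin_def using generate.one[of G S] s by (force intro!: exI[of _ 1])
  moreover have "S \<subseteq> adjoin (generate G S) s"
    using subset_adjoin[OF H] generate.incl[of _ S G] by blast
  ultimately show "generate G (insert s S) \<subseteq> adjoin (generate G S) s"
    by (intro generate_subgroup_incl[OF _ adjoin_subgroup[OF H D s]]) auto
  have H': "subgroup (generate G (insert s S)) G" using generate_is_subgroup S s by auto
  have "generate G S \<subseteq> generate G (insert s S)" using mono_generate[of S "insert s S"] by blast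
  moreover have "s [^] (j::int) \<in> generate G (insert s S)" for j
    using subgroup_int_pow_closed[OF H'] generate.incl[of s "insert s S" G] by blast
  ultimately show "adjoin (generate G S) s \<subseteq> generate G (insert s S)"
    unfolding adjoin_def using subgroup.m_closed[OF H'] by blast
qed
lemma additive_extension:
  assumes H: "subgroup H G" and D: "derived G (carrier G) \<subseteq> N" and NH: "N \<subseteq> H"
    and \<psi>: "additive_on H \<psi>" and N0: "\<forall>n\<in>N. \<psi> n = 0" and s: "s \<in> carrier G"
    and consistent: "\<And>h h' j j'. h \<in> H \<Longrightarrow> h' \<in> H \<Longrightarrow> h \<otimes> s [^] (j::int) = h' \<otimes> s [^] (j'::int) \<Longrightarrow>
      a * \<psi> h + j * b = a * \<psi> h' + j' * b"
  shows "\<exists>\<psi>'. additive_on (adjoin H s) \<psi>' \<and> (\<forall>h\<in>H. \<forall>j. \<psi>' (h \<otimes> s [^] (j::int)) = a * \<psi> h + j * b)"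
proof -
  define \<psi>' where "\<psi>' x = (SOME v. \<exists>h\<in>H. \<exists>j::int. x = h \<otimes> s [^] j \<and> v = a * \<psi> h + j * b)" for x
  have val: "\<psi>' (h \<otimes> s [^] j) = a * \<psi> h + j * b" if h: "h \<in> H" for h j
  proof -
    let ?P = "\<lambda>v. \<exists>h'\<in>H. \<exists>j'::int. h \<otimes> s [^] j = h' \<otimes> s [^] j' \<and> v = a * \<psi> h' + j' * b"
    have "?P (a * \<psi> h + j * b)" using h by blast
    then have "?P (\<psi>' (h \<otimes> s [^] j))" unfolding \<psi>'_def by (rule someI)
    then show ?thesis using consistent[OF h] by auto
  qed
  have "\<psi>' (x \<otimes> y) = \<psi>' x + \<psi>' y" if x: "x \<in> adjoin H s" and y: "y \<in> adjoin H s" for x y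
  proof -
    obtain h i where h: "h \<in> H" and x: "x = h \<otimes> s [^] (i::int)" using x unfolding adjoin_def by blast
    obtain h' j where h': "h' \<in> H" and y: "y = h' \<otimes> s [^] (j::int)" using y unfolding adjoin_def by blast
    have hc: "h \<in> carrier G" and hc': "h' \<in> carrier G" using h h' subgroup.subset[OF H] by auto
    have c: "conjugate (s [^] i) h' \<in> H"
      using conjugate_in_subgroup_above_derived[OF H _ _ h'] D NH s by auto
    have "x \<otimes> y = (h \<otimes> conjugate (s [^] i) h') \<otimes> s [^] (i + j)"
      using mult_adjoin_normal_form[OF hc hc' s] x y by simp
    then have "\<psi>' (x \<otimes> y) = a * \<psi> (h \<otimes> conjugate (s [^] i) h') + (i + j) * b"
      using val subgroup.m_closed[OF H h c] by simp
    also have "\<psi> (h \<otimes> conjugate (s [^] i) h') = \<psi> h + \<psi> h'"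
      using \<psi> h c additive_on_conjugate[OF H D NH \<psi> N0 _ h'] s unfolding additive_on_def by simp
    finally show ?thesis using val[OF h, of i] val[OF h', of j] x y by (simp add: algebra_simps)
  qed
  then show ?thesis using val unfolding additive_on_def by blast
qed

lemma adjoin_eq_imp_int_pow_mem:
  assumes H: "subgroup H G" and s: "s \<in> carrier G" and h: "h \<in> H" and h': "h' \<in> H"
    and eq: "h \<otimes> s [^] (j::int) = h' \<otimes> s [^] (j'::int)"
  shows "inv h' \<otimes> h = s [^] (j' - j)" and "s [^] (j' - j) \<in> H"
proof -
  have hc: "h \<in> carrier G" and hc': "h' \<in> carrier G" using h h' subgroup.subset[OF H] by auto
  have "inv h' \<otimes> h = inv h' \<otimes> (h \<otimes> s [^] j) \<otimes> inv (s [^] j)" using hc hc' s by (simp add: m_assoc)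
  also have "\<dots> = s [^] (j' - j)" using eq hc' s int_pow_diff[OF s] by (simp add: m_assoc)
  finally show "inv h' \<otimes> h = s [^] (j' - j)" .
  then show "s [^] (j' - j) \<in> H"
    using subgroup.m_closed[OF H subgroup.m_inv_closed[OF H h'] h] by simp
qed

lemma adjoin_unique_repr:
  assumes H: "subgroup H G" and s: "s \<in> carrier G" and free: "\<And>j::int. s [^] j \<in> H \<Longrightarrow> j = 0"
    and h: "h \<in> H" and h': "h' \<in> H" and eq: "h \<otimes> s [^] (j::int) = h' \<otimes> s [^] (j'::int)"
  shows "j = j'" and "h = h'"
proof -
  show jj: "j = j'" using free[OF adjoin_eq_imp_int_pow_mem(2)[OF assms(1,2,4,5,6)]] by simp
  show "h = h'" using eq h h' subgroup.subset[OF H] s unfolding jj by (metis int_pow_closed right_cancel subsetD)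
qed

lemma adjoin_consistent_torsion:
  assumes H: "subgroup H G" and s: "s \<in> carrier G" and sm: "s [^] (m::int) \<in> H"
    and \<psi>: "additive_on H \<psi>"
    and h: "h \<in> H" and h': "h' \<in> H" and eq: "h \<otimes> s [^] (j::int) = h' \<otimes> s [^] (j'::int)"
  shows "m * \<psi> h + j * \<psi> (s [^] m) = m * \<psi> h' + j' * \<psi> (s [^] m)"
proof -
  let ?u = "inv h' \<otimes> h"
  have u: "?u = s [^] (j' - j)" "?u \<in> H" using adjoin_eq_imp_int_pow_mem[OF H s h h' eq] by auto
  have "h' \<otimes> ?u = h" using h h' subgroup.subset[OF H] by (simp add: subset_iff)
  then have "\<psi> h = \<psi> h' + \<psi> ?u" using \<psi> h' u(2) unfolding additive_on_def by metis
  moreover have "?u [^] m = (s [^] m) [^] (j' - j)"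
    using u(1) int_pow_pow[OF s] by (simp add: mult.commute)
  then have "m * \<psi> ?u = (j' - j) * \<psi> (s [^] m)"
    using additive_on_int_pow[OF H \<psi> u(2), of m] additive_on_int_pow[OF H \<psi> sm, of "j' - j"]
    by (simp add: mult.commute)
  ultimately show ?thesis by (simp add: algebra_simps)
qed
definition finitely_many_cosets :: "'a set \<Rightarrow> 'a set \<Rightarrow> bool" where
  "finitely_many_cosets N H \<longleftrightarrow> (\<exists>T. finite T \<and> T \<subseteq> carrier G \<and> H \<subseteq> (\<Union>t\<in>T. N #> t))"

definition has_nonzero_int_hom :: "'a set \<Rightarrow> 'a set \<Rightarrow> bool" where
  "has_nonzero_int_hom N H \<longleftrightarrow> (\<exists>\<psi>. additive_on H \<psi> \<and> (\<forall>n\<in>N. \<psi> n = 0) \<and> (\<exists>x\<in>H. \<psi> x \<noteq> 0))"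

lemma finitely_many_cosets_adjoin_torsion:
  assumes H: "subgroup H G" and N: "N \<subseteq> carrier G" and s: "s \<in> carrier G"
    and m: "m > 0" and sm: "s [^] (m::int) \<in> H" and fin: "finitely_many_cosets N H"
  shows "finitely_many_cosets N (adjoin H s)"
proof -
  obtain T where T: "finite T" "T \<subseteq> carrier G" and cover: "H \<subseteq> (\<Union>t\<in>T. N #> t)"
    using fin unfolding finitely_many_cosets_def by blast
  let ?T = "(\<lambda>(t, r). t \<otimes> s [^] r) ` (T \<times> {0..<m})"
  have "x \<in> (\<Union>t\<in>?T. N #> t)" if "x \<in> adjoin H s" for x
  proof -
    obtain h j where h: "h \<in> H" and x: "x = h \<otimes> s [^] (j::int)"
      using \<open>x \<in> adjoin H s\<close> unfolding adjoin_def by blast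
    have hc: "h \<in> carrier G" using h subgroup.subset[OF H] by auto
    have "(s [^] m) [^] (j div m) \<otimes> s [^] (j mod m) = s [^] j"
      using s by (simp add: int_pow_pow int_pow_mult[symmetric])
    then have x': "x = (h \<otimes> (s [^] m) [^] (j div m)) \<otimes> s [^] (j mod m)"
      using x hc s by (simp add: m_assoc)
    have "h \<otimes> (s [^] m) [^] (j div m) \<in> H"
      using subgroup.m_closed[OF H h subgroup_int_pow_closed[OF H sm]] .
    then obtain t where t: "t \<in> T" and "h \<otimes> (s [^] m) [^] (j div m) \<in> N #> t"
      using cover by blast
    then obtain n where n: "n \<in> N" and tn: "h \<otimes> (s [^] m) [^] (j div m) = n \<otimes> t"
      unfolding r_coset_def by blast
    with x' have "x = n \<otimes> (t \<otimes> s [^] (j mod m))"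
      using n t N T(2) s by (simp add: m_assoc subset_iff)
    then have "x \<in> N #> (t \<otimes> s [^] (j mod m))" using n N t T(2) s by (auto intro!: rcosI)
    moreover have "t \<otimes> s [^] (j mod m) \<in> ?T" using t m by (auto intro!: image_eqI[of _ _ "(t, j mod m)"])
    ultimately show ?thesis by blast
  qed
  moreover have "?T \<subseteq> carrier G" using T(2) s by auto
  moreover have "finite ?T" using T(1) by simp
  ultimately show ?thesis unfolding finitely_many_cosets_def by blast
qed

lemma has_nonzero_int_hom_adjoin_torsion:
  assumes H: "subgroup H G" and D: "derived G (carrier G) \<subseteq> N" and NH: "N \<subseteq> H" and s: "s \<in> carrier G"
    and m: "m \<noteq> 0" and sm: "s [^] (m::int) \<in> H" and hom: "has_nonzero_int_hom N H"
  shows "has_nonzero_int_hom N (adjoin H s)"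
proof -
  obtain \<psi> x0 where \<psi>: "additive_on H \<psi>" and N0: "\<forall>n\<in>N. \<psi> n = 0" and x0: "x0 \<in> H" "\<psi> x0 \<noteq> 0"
    using hom unfolding has_nonzero_int_hom_def by blast
  obtain \<psi>' where \<psi>': "additive_on (adjoin H s) \<psi>'"
    and val: "\<forall>h\<in>H. \<forall>j. \<psi>' (h \<otimes> s [^] (j::int)) = m * \<psi> h + j * \<psi> (s [^] m)"
    using additive_extension[OF H D NH \<psi> N0 s adjoin_consistent_torsion[OF H s sm \<psi>]] by blast
  have on_H: "\<psi>' h = m * \<psi> h" if "h \<in> H" for h
    using val[rule_format, OF that, of 0] subgroup.mem_carrier[OF H that] by simp
  show ?thesis
    unfolding has_nonzero_int_hom_def using \<psi>' N0 NH x0 m subset_adjoin[OF H]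
    by (intro exI[of _ \<psi>'] conjI bexI[of _ x0]) (auto simp: on_H subset_iff)
qed

lemma has_nonzero_int_hom_adjoin_free:
  assumes H: "subgroup H G" and D: "derived G (carrier G) \<subseteq> N" and NH: "N \<subseteq> H" and s: "s \<in> carrier G"
    and free: "\<And>j::int. s [^] j \<in> H \<Longrightarrow> j = 0"
  shows "has_nonzero_int_hom N (adjoin H s)"
proof -
  have "additive_on H (\<lambda>_. 0)" unfolding additive_on_def by simp
  then obtain \<psi>' where \<psi>': "additive_on (adjoin H s) \<psi>'"
    and val: "\<forall>h\<in>H. \<forall>j. \<psi>' (h \<otimes> s [^] (j::int)) = 0 * 0 + j * 1"
    using additive_extension[OF H D NH _ _ s, of "\<lambda>_. 0" 0 1] adjoin_unique_repr[OF H s free] by auto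
  have "\<psi>' h = 0" if "h \<in> H" for h
    using val[rule_format, OF that, of 0] subgroup.mem_carrier[OF H that] by simp
  moreover have "\<psi>' (\<one> \<otimes> s [^] (1::int)) = 1" and "\<one> \<otimes> s [^] (1::int) \<in> adjoin H s"
    using val subgroup.one_closed[OF H] unfolding adjoin_def by auto
  ultimately show ?thesis unfolding has_nonzero_int_hom_def using \<psi>' NH
    by (intro exI[of _ \<psi>'] conjI bexI[of _ "\<one> \<otimes> s [^] (1::int)"]) auto
qed

text \<open>
  Adjoining a generator \<open>s\<close>: if some power of \<open>s\<close> lies in \<open>H\<close>, finiteness of \<open>H/N\<close> and
  nonzero homomorphisms both extend; otherwise \<open>h s\<^sup>j \<mapsto> j\<close> is one.
\<close>

lemma finitely_many_cosets_or_has_nonzero_int_hom: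
  assumes N: "subgroup N G" and D: "derived G (carrier G) \<subseteq> N"
  shows "finite S \<Longrightarrow> S \<subseteq> carrier G \<Longrightarrow>
    finitely_many_cosets N (generate G (S \<union> N)) \<or> has_nonzero_int_hom N (generate G (S \<union> N))"
proof (induction S rule: finite_induct)
  case empty
  have "generate G N \<subseteq> N #> \<one>"
    using generate_subgroup_incl[OF subset_refl N] coset_mult_one[OF subgroup.subset[OF N]] by simp
  then show ?case unfolding finitely_many_cosets_def by (intro disjI1 exI[of _ "{\<one>}"]) auto
next
  case (insert s S)
  let ?H = "generate G (S \<union> N)"
  have s: "s \<in> carrier G" and SN: "S \<union> N \<subseteq> carrier G" using insert.prems subgroup.subset[OF N] by auto
  have H: "subgroup ?H G" using generate_is_subgroup[OF SN] .
  have NH: "N \<subseteq> ?H" using generate.incl[of _ "S \<union> N" G] by blast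
  have eq: "generate G (insert s S \<union> N) = adjoin ?H s"
    using generate_insert_eq_adjoin[OF SN _ s] D NH by simp
  show ?case
  proof (cases "\<exists>j::int. j \<noteq> 0 \<and> s [^] j \<in> ?H")
    case True
    then obtain j :: int where j: "j \<noteq> 0" "s [^] j \<in> ?H" by blast
    have pow: "s [^] \<bar>j\<bar> \<in> ?H" "\<bar>j\<bar> > 0"
    proof -
      show "s [^] \<bar>j\<bar> \<in> ?H"
        using j(2) subgroup.m_inv_closed[OF H] int_pow_neg[OF s, of j] by (cases "j < 0") auto
      show "\<bar>j\<bar> > 0" using j(1) by simp
    qed
    have "finitely_many_cosets N ?H \<or> has_nonzero_int_hom N ?H"
      using insert.IH insert.prems by simp
    then show ?thesis unfolding eq
      using finitely_many_cosets_adjoin_torsion[OF H _ s pow(2,1)] subgroup.subset[OF N]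
        has_nonzero_int_hom_adjoin_torsion[OF H D NH s _ pow(1)] pow(2) by auto
  next
    case False
    then have "j = 0" if "s [^] j \<in> ?H" for j :: int using that by blast
    then show ?thesis unfolding eq by (intro disjI2 has_nonzero_int_hom_adjoin_free[OF H D NH s])
  qed
qed

lemma finite_rcosets_if_finitely_many_cosets:
  assumes N: "subgroup N G" and "finitely_many_cosets N (carrier G)"
  shows "finite (rcosets N)"
proof -
  obtain T where T: "finite T" "T \<subseteq> carrier G" and cover: "carrier G \<subseteq> (\<Union>t\<in>T. N #> t)"
    using assms(2) unfolding finitely_many_cosets_def by blast
  have "rcosets N \<subseteq> (\<lambda>t. N #> t) ` T"
  proof
    fix C assume "C \<in> rcosets N"
    then obtain x where x: "x \<in> carrier G" and C: "C = N #> x" unfolding RCOSETS_def by blast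
    obtain t where t: "t \<in> T" and "x \<in> N #> t" using cover x by blast
    then have "N #> t = N #> x" using repr_independence[OF _ _ N] T(2) by auto
    then show "C \<in> (\<lambda>t. N #> t) ` T" using C t by blast
  qed
  then show ?thesis using T(1) finite_subset by blast
qed

lemma least_positive_value_dvd:
  assumes \<psi>: "additive_on (carrier G) \<psi>" and t: "t \<in> carrier G" and d: "\<psi> t = d" "d > 0"
    and least: "\<And>y. y \<in> carrier G \<Longrightarrow> \<psi> y > 0 \<Longrightarrow> d \<le> \<psi> y" and x: "x \<in> carrier G"
  shows "d dvd \<psi> x"
proof -
  define y where "y = x \<otimes> t [^] (- (\<psi> x div d))"
  have y: "y \<in> carrier G" unfolding y_def using x t by simp
  have "\<psi> y = \<psi> x + - (\<psi> x div d) * d"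
    using \<psi> x t d additive_on_int_pow[OF subgroup_self \<psi> t] unfolding additive_on_def y_def by simp
  also have "\<dots> = \<psi> x mod d" by (simp add: minus_div_mult_eq_mod[symmetric])
  finally have "\<psi> y = \<psi> x mod d" .
  moreover have "\<psi> x mod d < d" "\<psi> x mod d \<ge> 0" using d(2) by simp_all
  ultimately have "\<psi> x mod d = 0" using least[OF y] by linarith
  then show ?thesis by (simp add: dvd_eq_mod_eq_0)
qed

lemma additive_on_normalize:
  assumes \<psi>: "additive_on (carrier G) \<psi>" and N0: "\<forall>n\<in>N. \<psi> n = 0"
    and x0: "x0 \<in> carrier G" "\<psi> x0 \<noteq> 0"
  shows "\<exists>\<psi>' t. additive_on (carrier G) \<psi>' \<and> (\<forall>n\<in>N. \<psi>' n = 0) \<and> t \<in> carrier G \<and> \<psi>' t = 1"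
proof -
  let ?P = "\<lambda>n::nat. n > 0 \<and> (\<exists>x\<in>carrier G. \<psi> x = int n)"
  have "\<psi> (inv x0) = - \<psi> x0" using additive_on_inv[OF subgroup_self \<psi> x0(1)] .
  then have "?P (nat \<bar>\<psi> x0\<bar>)" using x0 by (cases "\<psi> x0 > 0") (auto intro: bexI[of _ "inv x0"])
  then have "?P (LEAST n. ?P n)" by (rule LeastI)
  then obtain t d where t: "t \<in> carrier G" "\<psi> t = int d" "d > 0" and d: "d = (LEAST n. ?P n)" by blast
  have least: "int d \<le> \<psi> y" if "y \<in> carrier G" "\<psi> y > 0" for y
  proof -
    have "?P (nat (\<psi> y))" using that by auto
    then have "d \<le> nat (\<psi> y)" unfolding d by (rule Least_le)
    then show ?thesis using that(2) by simp
  qed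
  define \<psi>' where "\<psi>' x = \<psi> x div int d" for x
  have "additive_on (carrier G) \<psi>'"
    using \<psi> least_positive_value_dvd[OF \<psi> t(1,2) _ least] t(3)
    unfolding additive_on_def \<psi>'_def by (simp add: div_plus_div_distrib_dvd_left)
  moreover have "\<forall>n\<in>N. \<psi>' n = 0" "\<psi>' t = 1" using N0 t unfolding \<psi>'_def by auto
  ultimately show ?thesis using t(1) by blast
qed

lemma subgroup_set_mult_derived:
  assumes W: "subgroup W G"
  shows "subgroup (W <#> derived G (carrier G)) G"
    and "derived G (carrier G) \<subseteq> W <#> derived G (carrier G)"
    and "W \<subseteq> W <#> derived G (carrier G)"
proof -
  let ?D = "derived G (carrier G)"
  have D: "?D \<lhd> G" by (rule derived_self_is_normal)
  show "subgroup (W <#> ?D) G" using commut_normal[OF W D] mult_norm_subgroup[OF D W] by simp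
  have "d = \<one> \<otimes> d" if "d \<in> ?D" for d using that derived_incl[OF subset_refl subgroup_self] by auto
  then show "?D \<subseteq> W <#> ?D" unfolding set_mult_def using subgroup.one_closed[OF W] by blast
  have "w = w \<otimes> \<one>" if "w \<in> W" for w using that subgroup.subset[OF W] by auto
  then show "W \<subseteq> W <#> ?D"
    unfolding set_mult_def using subgroup.one_closed[OF normal_imp_subgroup[OF D]] by blast
qed

lemma exists_int_hom_onto:
  assumes S: "finite S" "S \<subseteq> carrier G" "generate G S = carrier G"
    and N: "subgroup N G" and D: "derived G (carrier G) \<subseteq> N" and infinite: "infinite (rcosets N)"
  shows "\<exists>\<psi> t. additive_on (carrier G) \<psi> \<and> (\<forall>n\<in>N. \<psi> n = 0) \<and> t \<in> carrier G \<and> \<psi> t = 1"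
proof -
  have "generate G (S \<union> N) = carrier G"
    using S subgroup.subset[OF N] generate_incl[of "S \<union> N"] mono_generate[of S "S \<union> N"] by auto
  then have "has_nonzero_int_hom N (carrier G)"
    using finitely_many_cosets_or_has_nonzero_int_hom[OF N D S(1,2)] infinite
      finite_rcosets_if_finitely_many_cosets[OF N] by auto
  then show ?thesis using additive_on_normalize unfolding has_nonzero_int_hom_def by blast
qed

end

lemma finitely_generated_group_int_hom:
  assumes F: "finitely_generated_group F" and W: "subgroup W F"
    and infinite: "infinite (rcosets\<^bsub>F\<^esub> (W <#>\<^bsub>F\<^esub> derived F (carrier F)))"
  shows "\<exists>\<psi> t. group.additive_on F (carrier F) \<psi> \<and> (\<forall>w\<in>W. \<psi> w = 0) \<and> t \<in> carrier F \<and> \<psi> t = 1"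
proof -
  obtain S where "group F" and S: "finite S" "S \<subseteq> carrier F" "generate F S = carrier F"
    using F unfolding finitely_generated_group_def by blast
  interpret F: group F by fact
  note N = F.subgroup_set_mult_derived[OF W]
  show ?thesis using F.exists_int_hom_onto[OF S N(1,2) infinite] N(3) by blast
qed

section \<open>Homomorphisms out of a split extension by \<open>\<int>\<close>\<close>

locale int_split = group G + F: group F
  for G (structure) and F :: "('f, 'd) monoid_scheme" +
  fixes \<psi> :: "'f \<Rightarrow> int" and t :: 'f
  assumes additive: "F.additive_on (carrier F) \<psi>"
    and t_closed [simp]: "t \<in> carrier F" and psi_t: "\<psi> t = 1"
begin

definition K :: "'f set" where
  "K = {x \<in> carrier F. \<psi> x = 0}"

abbreviation tpow :: "int \<Rightarrow> 'f" where
  "tpow j \<equiv> t [^]\<^bsub>F\<^esub> j"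

lemma psi_mult: "x \<in> carrier F \<Longrightarrow> y \<in> carrier F \<Longrightarrow> \<psi> (x \<otimes>\<^bsub>F\<^esub> y) = \<psi> x + \<psi> y"
  using additive unfolding F.additive_on_def by blast

lemma psi_tpow [simp]: "\<psi> (tpow j) = j"
  using F.additive_on_int_pow[OF F.subgroup_self additive t_closed] psi_t by simp

lemma psi_inv: "x \<in> carrier F \<Longrightarrow> \<psi> (inv\<^bsub>F\<^esub> x) = - \<psi> x"
  using F.additive_on_inv[OF F.subgroup_self additive] .

lemma K_subset: "K \<subseteq> carrier F"
  unfolding K_def by auto

lemma mult_tpow_in_K: "f \<in> carrier F \<Longrightarrow> f \<otimes>\<^bsub>F\<^esub> tpow (- \<psi> f) \<in> K"
  unfolding K_def by (simp add: psi_mult)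

lemma decompose: "f \<in> carrier F \<Longrightarrow> f = (f \<otimes>\<^bsub>F\<^esub> tpow (- \<psi> f)) \<otimes>\<^bsub>F\<^esub> tpow (\<psi> f)"
  by (simp add: F.m_assoc F.int_pow_mult[symmetric])

lemma conjugate_in_K: "k \<in> K \<Longrightarrow> x \<in> carrier F \<Longrightarrow> F.conjugate x k \<in> K"
  unfolding K_def F.conjugate_def by (simp add: psi_mult psi_inv)

lemma hom_imp_group_hom: "\<phi> \<in> hom F G \<Longrightarrow> group_hom F G \<phi>"
  by (simp add: group_hom_def group_hom_axioms_def F.is_group is_group)

lemma hom_eqI:
  assumes "\<phi>1 \<in> hom F G" "\<phi>2 \<in> hom F G" "\<forall>k\<in>K. \<phi>1 k = \<phi>2 k" "\<phi>1 t = \<phi>2 t" "f \<in> carrier F"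
  shows "\<phi>1 f = \<phi>2 f"
proof -
  have "\<phi> f = \<phi> (f \<otimes>\<^bsub>F\<^esub> tpow (- \<psi> f)) \<otimes> \<phi> t [^] \<psi> f" if "\<phi> \<in> hom F G" for \<phi>
    using decompose[OF assms(5)] group_hom.hom_mult[OF hom_imp_group_hom[OF that]]
      group_hom.hom_int_pow[OF hom_imp_group_hom[OF that]] assms(5) by (metis F.int_pow_closed F.m_closed t_closed)
  then show ?thesis using assms mult_tpow_in_K[OF assms(5)] by metis
qed

text \<open>The possible values at \<open>t\<close> of a homomorphism that agrees with \<open>\<phi>0\<close> on \<open>K\<close>.\<close>

definition admissible_images :: "('f \<Rightarrow> 'a) \<Rightarrow> 'a set" where
  "admissible_images \<phi>0 = {x \<in> carrier G. \<forall>k\<in>K. conjugate x (\<phi>0 k) = \<phi>0 (F.conjugate t k)}"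

lemma conjugate_int_pow_admissible:
  assumes \<phi>0: "\<phi>0 \<in> hom F G" and x: "x \<in> admissible_images \<phi>0"
  shows "\<forall>k\<in>K. conjugate (x [^] j) (\<phi>0 k) = \<phi>0 (F.conjugate (tpow j) k)"
proof (induction j rule: int_induct[where k = 0])
  have xc: "x \<in> carrier G" and step: "\<And>k. k \<in> K \<Longrightarrow> conjugate x (\<phi>0 k) = \<phi>0 (F.conjugate t k)"
    using x unfolding admissible_images_def by auto
  have \<phi>K: "\<phi>0 k \<in> carrier G" if "k \<in> K" for k using hom_in_carrier[OF \<phi>0] K_subset that by blast
  have kc: "k \<in> carrier F" if "k \<in> K" for k using K_subset that by blast
  {
    case base
    show ?case using \<phi>K kc by simp
  next
    case (step1 i)
    show ?case
    proof
      fix k assume k: "k \<in> K"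
      have "conjugate (x [^] (i + 1)) (\<phi>0 k) = conjugate (x [^] i) (\<phi>0 (F.conjugate t k))"
        using xc \<phi>K[OF k] step[OF k] by (simp add: int_pow_mult conjugate_mult)
      also have "\<dots> = \<phi>0 (F.conjugate (tpow (i + 1)) k)"
        using step1 conjugate_in_K[OF k] kc[OF k] by (simp add: F.int_pow_mult F.conjugate_mult)
      finally show "conjugate (x [^] (i + 1)) (\<phi>0 k) = \<phi>0 (F.conjugate (tpow (i + 1)) k)" .
    qed
  next
    case (step2 i)
    show ?case
    proof
      fix k assume k: "k \<in> K"
      let ?k' = "F.conjugate (inv\<^bsub>F\<^esub> t) k"
      have k': "?k' \<in> K" using conjugate_in_K[OF k] by simp
      have "conjugate x (\<phi>0 ?k') = \<phi>0 k" using step[OF k'] kc[OF k] by simp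
      then have inv_step: "conjugate (inv x) (\<phi>0 k) = \<phi>0 ?k'"
        using xc \<phi>K[OF k'] by (metis conjugate_inv_cancel(1))
      have "x [^] (i - 1) = x [^] i \<otimes> inv x" "tpow (i - 1) = tpow i \<otimes>\<^bsub>F\<^esub> inv\<^bsub>F\<^esub> t"
        using int_pow_mult[OF xc, of i "-1"] F.int_pow_mult[OF t_closed, of i "-1"]
          int_pow_neg[OF xc, of 1] F.int_pow_neg[OF t_closed, of 1] xc by auto
      then show "conjugate (x [^] (i - 1)) (\<phi>0 k) = \<phi>0 (F.conjugate (tpow (i - 1)) k)"
        using step2 inv_step k' xc \<phi>K[OF k] kc[OF k] by (simp add: conjugate_mult F.conjugate_mult)
    qed
  }
qed
text \<open>The homomorphism \<open>k t\<^sup>j \<mapsto> \<phi>0 k \<otimes> x [^] j\<close> of \<open>F = K \<rtimes> \<langle>t\<rangle>\<close>.\<close>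

definition extend :: "('f \<Rightarrow> 'a) \<Rightarrow> 'a \<Rightarrow> 'f \<Rightarrow> 'a" where
  "extend \<phi>0 x = (\<lambda>f\<in>carrier F. \<phi>0 (f \<otimes>\<^bsub>F\<^esub> tpow (- \<psi> f)) \<otimes> x [^] \<psi> f)"

lemma mult_tpow_neg_add:
  assumes "f \<in> carrier F" "g \<in> carrier F"
  shows "(f \<otimes>\<^bsub>F\<^esub> g) \<otimes>\<^bsub>F\<^esub> tpow (- (a + b)) =
    (f \<otimes>\<^bsub>F\<^esub> tpow (- a)) \<otimes>\<^bsub>F\<^esub> F.conjugate (tpow a) (g \<otimes>\<^bsub>F\<^esub> tpow (- b))"
proof -
  have "tpow (- (a + b)) = inv\<^bsub>F\<^esub> (tpow b) \<otimes>\<^bsub>F\<^esub> inv\<^bsub>F\<^esub> (tpow a)"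
    using F.int_pow_neg[OF t_closed, of "a + b"] F.int_pow_mult[OF t_closed, of a b] F.inv_mult_group by simp
  then show ?thesis unfolding F.conjugate_def using assms
    by (simp add: F.int_pow_neg F.m_assoc F.inv_mult_group)
qed

lemma extend_hom:
  assumes \<phi>0: "\<phi>0 \<in> hom F G" and x: "x \<in> admissible_images \<phi>0"
  shows "extend \<phi>0 x \<in> hom F G"
proof (rule homI)
  have xc: "x \<in> carrier G" using x unfolding admissible_images_def by auto
  have \<phi>c: "\<And>f. f \<in> carrier F \<Longrightarrow> \<phi>0 f \<in> carrier G" using hom_in_carrier[OF \<phi>0] by blast
  show "extend \<phi>0 x f \<in> carrier G" if "f \<in> carrier F" for f
    unfolding extend_def using that \<phi>c xc by simp
  fix f g assume f: "f \<in> carrier F" and g: "g \<in> carrier F"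
  define k1 where "k1 = f \<otimes>\<^bsub>F\<^esub> tpow (- \<psi> f)"
  define k2 where "k2 = g \<otimes>\<^bsub>F\<^esub> tpow (- \<psi> g)"
  have k: "k1 \<in> K" "k2 \<in> K" unfolding k1_def k2_def using mult_tpow_in_K f g by auto
  then have kc: "k1 \<in> carrier F" "k2 \<in> carrier F" using K_subset by auto
  have "extend \<phi>0 x (f \<otimes>\<^bsub>F\<^esub> g) = \<phi>0 (k1 \<otimes>\<^bsub>F\<^esub> F.conjugate (tpow (\<psi> f)) k2) \<otimes> x [^] (\<psi> f + \<psi> g)"
    unfolding extend_def k1_def k2_def using f g mult_tpow_neg_add by (simp add: psi_mult)
  also have "\<dots> = \<phi>0 k1 \<otimes> conjugate (x [^] \<psi> f) (\<phi>0 k2) \<otimes> (x [^] \<psi> f \<otimes> x [^] \<psi> g)"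
    using hom_mult[OF \<phi>0] kc conjugate_int_pow_admissible[OF \<phi>0 x] k(2) int_pow_mult[OF xc] by simp
  also have "\<dots> = \<phi>0 k1 \<otimes> (conjugate (x [^] \<psi> f) (\<phi>0 k2) \<otimes> x [^] \<psi> f) \<otimes> x [^] \<psi> g"
    using \<phi>c kc xc by (simp add: m_assoc)
  also have "\<dots> = (\<phi>0 k1 \<otimes> x [^] \<psi> f) \<otimes> (\<phi>0 k2 \<otimes> x [^] \<psi> g)"
    using conjugate_mult_right \<phi>c kc xc by (simp add: m_assoc)
  also have "\<dots> = extend \<phi>0 x f \<otimes> extend \<phi>0 x g"
    unfolding extend_def k1_def k2_def using f g by simp
  finally show "extend \<phi>0 x (f \<otimes>\<^bsub>F\<^esub> g) = extend \<phi>0 x f \<otimes> extend \<phi>0 x g" .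
qed

lemma extend_on_K: "\<phi>0 \<in> hom F G \<Longrightarrow> k \<in> K \<Longrightarrow> extend \<phi>0 x k = \<phi>0 k"
  unfolding extend_def K_def using hom_in_carrier[of \<phi>0 F G k] by simp

lemma extend_t: "\<phi>0 \<in> hom F G \<Longrightarrow> x \<in> carrier G \<Longrightarrow> extend \<phi>0 x t = x"
  unfolding extend_def using psi_t group_hom.hom_one[OF hom_imp_group_hom, of \<phi>0] F.int_pow_neg[OF t_closed, of 1]
  by simp

definition fibre :: "('f \<Rightarrow> 'a) \<Rightarrow> ('f \<Rightarrow> 'a) set" where
  "fibre \<phi>0 = {\<phi> \<in> hom F G. \<phi> \<in> extensional (carrier F) \<and> (\<forall>k\<in>K. \<phi> k = \<phi>0 k)}"

lemma bij_betw_fibre_admissible_images: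
  assumes \<phi>0: "\<phi>0 \<in> hom F G"
  shows "bij_betw (\<lambda>\<phi>. \<phi> t) (fibre \<phi>0) (admissible_images \<phi>0)"
proof (rule bij_betw_byWitness[where f' = "extend \<phi>0"])
  have t_image: "\<phi> t \<in> admissible_images \<phi>0" if "\<phi> \<in> fibre \<phi>0" for \<phi>
  proof -
    have \<phi>: "\<phi> \<in> hom F G" and on_K: "\<forall>k\<in>K. \<phi> k = \<phi>0 k" using that unfolding fibre_def by auto
    have "conjugate (\<phi> t) (\<phi>0 k) = \<phi>0 (F.conjugate t k)" if "k \<in> K" for k
      using group_hom.hom_conjugate[OF hom_imp_group_hom[OF \<phi>], of t k] on_K that conjugate_in_K[OF that]
        K_subset by auto
    then show ?thesis unfolding admissible_images_def using hom_in_carrier[OF \<phi>] by simp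
  qed
  then show "(\<lambda>\<phi>. \<phi> t) ` fibre \<phi>0 \<subseteq> admissible_images \<phi>0" by blast
  show "extend \<phi>0 ` admissible_images \<phi>0 \<subseteq> fibre \<phi>0"
    unfolding fibre_def using extend_hom[OF \<phi>0] extend_on_K[OF \<phi>0] by (auto simp: extend_def)
  show "\<forall>x\<in>admissible_images \<phi>0. extend \<phi>0 x t = x"
    using extend_t[OF \<phi>0] unfolding admissible_images_def by simp
  show "\<forall>\<phi>\<in>fibre \<phi>0. extend \<phi>0 (\<phi> t) = \<phi>"
  proof
    fix \<phi> assume \<phi>: "\<phi> \<in> fibre \<phi>0"
    then have "\<phi> t \<in> admissible_images \<phi>0" by (rule t_image)
    then have "extend \<phi>0 (\<phi> t) f = \<phi> f" if "f \<in> carrier F" for f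
      using hom_eqI[OF extend_hom[OF \<phi>0] _ _ _ that] \<phi> extend_on_K[OF \<phi>0] extend_t[OF \<phi>0]
      unfolding fibre_def admissible_images_def by auto
    then show "extend \<phi>0 (\<phi> t) = \<phi>"
      using \<phi> unfolding fibre_def extend_def extensional_def by auto
  qed
qed

lemma admissible_images_eq_coset:
  assumes \<phi>0: "\<phi>0 \<in> hom F G"
  shows "admissible_images \<phi>0 = (\<otimes>) (\<phi>0 t) ` centralizer (\<phi>0 ` K)"
proof -
  have \<phi>t: "\<phi>0 t \<in> carrier G" using hom_in_carrier[OF \<phi>0] by simp
  have \<phi>K: "\<phi>0 ` K \<subseteq> carrier G" using hom_in_carrier[OF \<phi>0] K_subset by auto
  have tK: "\<phi>0 (F.conjugate t k) = conjugate (\<phi>0 t) (\<phi>0 k)" if "k \<in> K" for k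
    using group_hom.hom_conjugate[OF hom_imp_group_hom[OF \<phi>0]] that K_subset by auto
  have iff: "x \<in> admissible_images \<phi>0 \<longleftrightarrow> inv (\<phi>0 t) \<otimes> x \<in> centralizer (\<phi>0 ` K)"
    if x: "x \<in> carrier G" for x
    unfolding admissible_images_def centralizer_def using x \<phi>t \<phi>K tK
    by (auto simp: conjugate_eq_conjugate_iff conjugate_eq_iff_commute[symmetric] subset_iff)
  show ?thesis
  proof (intro equalityI subsetI)
    fix x assume x: "x \<in> admissible_images \<phi>0"
    then have "x \<in> carrier G" unfolding admissible_images_def by auto
    then have "x = \<phi>0 t \<otimes> (inv (\<phi>0 t) \<otimes> x)" using \<phi>t by simp
    then show "x \<in> (\<otimes>) (\<phi>0 t) ` centralizer (\<phi>0 ` K)" using iff x \<open>x \<in> carrier G\<close> by blast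
  next
    fix x assume "x \<in> (\<otimes>) (\<phi>0 t) ` centralizer (\<phi>0 ` K)"
    then obtain c where c: "c \<in> centralizer (\<phi>0 ` K)" and x: "x = \<phi>0 t \<otimes> c" by blast
    then have "c \<in> carrier G" unfolding centralizer_def by auto
    then show "x \<in> admissible_images \<phi>0" using iff[of x] c x \<phi>t by simp
  qed
qed

lemma card_fibre:
  assumes "\<phi>0 \<in> hom F G"
  shows "card (fibre \<phi>0) = card (centralizer (\<phi>0 ` K))"
proof -
  have "inj_on ((\<otimes>) (\<phi>0 t)) (centralizer (\<phi>0 ` K))"
    using hom_in_carrier[OF assms] by (intro inj_onI) (auto simp: centralizer_def)
  then show ?thesis
    using bij_betw_same_card[OF bij_betw_fibre_admissible_images[OF assms]]
      admissible_images_eq_coset[OF assms] card_image by metis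
qed
lemma conjugate_comp_hom:
  "\<phi> \<in> hom F G \<Longrightarrow> n \<in> carrier G \<Longrightarrow> (\<lambda>f\<in>carrier F. conjugate n (\<phi> f)) \<in> hom F G"
  by (rule homI) (simp_all add: hom_in_carrier hom_mult conjugate_mult_distrib)

definition conjugate_on_K :: "'a \<Rightarrow> ('f \<Rightarrow> 'a) \<Rightarrow> 'f \<Rightarrow> 'a" where
  "conjugate_on_K n \<rho> = restrict (\<lambda>k. conjugate n (\<rho> k)) K"

lemma restrict_conjugate_comp:
  "restrict (\<lambda>f\<in>carrier F. conjugate n (\<phi> f)) K = conjugate_on_K n (restrict \<phi> K)"
  unfolding conjugate_on_K_def using K_subset by (auto simp: restrict_def fun_eq_iff subset_iff)

lemma stabilizer_conjugate_on_K:
  assumes H: "subgroup H G" and \<rho>: "\<rho> \<in> extensional K" "\<rho> ` K \<subseteq> carrier G"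
  shows "{n \<in> H. conjugate_on_K n \<rho> = \<rho>} = H \<inter> centralizer (\<rho> ` K)"
proof -
  have "conjugate_on_K n \<rho> = \<rho> \<longleftrightarrow> (\<forall>k\<in>K. conjugate n (\<rho> k) = \<rho> k)" for n
    using \<rho>(1) unfolding conjugate_on_K_def extensional_def by (auto simp: fun_eq_iff)
  then show ?thesis
    using \<rho>(2) subgroup.subset[OF H] unfolding centralizer_def
    by (auto simp: conjugate_eq_iff_commute subset_iff)
qed

lemma card_homs_eq_sum_centralizers:
  fixes P :: "('f \<Rightarrow> 'a) \<Rightarrow> bool"
  defines "Hs \<equiv> {\<phi> \<in> hom F G. \<phi> \<in> extensional (carrier F) \<and> P (restrict \<phi> K)}"
  assumes "finite Hs"
  shows "card Hs = (\<Sum>\<rho>\<in>(\<lambda>\<phi>. restrict \<phi> K) ` Hs. card (centralizer (\<rho> ` K)))"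
proof -
  let ?R = "(\<lambda>\<phi>. restrict \<phi> K) ` Hs"
  have "card Hs = card (\<Union>\<rho>\<in>?R. {\<phi> \<in> Hs. restrict \<phi> K = \<rho>})"
    by (rule arg_cong[where f = card]) blast
  also have "\<dots> = (\<Sum>\<rho>\<in>?R. card {\<phi> \<in> Hs. restrict \<phi> K = \<rho>})"
    using \<open>finite Hs\<close> by (intro card_UN_disjoint) auto
  also have "\<dots> = (\<Sum>\<rho>\<in>?R. card (centralizer (\<rho> ` K)))"
  proof (rule sum.cong[OF refl])
    fix \<rho> assume "\<rho> \<in> ?R"
    then obtain \<phi>0 where \<phi>0: "\<phi>0 \<in> Hs" and \<rho>: "\<rho> = restrict \<phi>0 K" by blast
    have restrict_eq: "restrict \<phi> K = \<rho> \<longleftrightarrow> (\<forall>k\<in>K. \<phi> k = \<phi>0 k)" for \<phi>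
      unfolding \<rho> by (metis restrict_apply' restrict_ext)
    then have "{\<phi> \<in> Hs. restrict \<phi> K = \<rho>} = fibre \<phi>0"
      using \<phi>0 unfolding Hs_def fibre_def by (auto simp flip: \<rho>) (metis restrict_eq)
    moreover have "\<rho> ` K = \<phi>0 ` K" unfolding \<rho> by auto
    ultimately show "card {\<phi> \<in> Hs. restrict \<phi> K = \<rho>} = card (centralizer (\<rho> ` K))"
      using card_fibre \<phi>0 unfolding Hs_def by auto
  qed
  finally show ?thesis .
qed
lemma card_dvd_card_homs:
  assumes H: "subgroup H G" and fin: "finite (carrier G)"
    and invariant: "\<And>\<phi> n. \<phi> \<in> hom F G \<Longrightarrow> P (restrict \<phi> K) \<Longrightarrow> n \<in> H \<Longrightarrow> P (conjugate_on_K n (restrict \<phi> K))"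
  shows "card H dvd card {\<phi> \<in> hom F G. \<phi> \<in> extensional (carrier F) \<and> P (restrict \<phi> K)}"
proof (cases "finite {\<phi> \<in> hom F G. \<phi> \<in> extensional (carrier F) \<and> P (restrict \<phi> K)}")
  case True
  let ?Hs = "{\<phi> \<in> hom F G. \<phi> \<in> extensional (carrier F) \<and> P (restrict \<phi> K)}"
  let ?R = "(\<lambda>\<phi>. restrict \<phi> K) ` ?Hs"
  have Hc: "H \<subseteq> carrier G" using subgroup.subset[OF H] .
  have R: "\<rho> \<in> extensional K" "\<rho> ` K \<subseteq> carrier G" if \<rho>: "\<rho> \<in> ?R" for \<rho>
  proof -
    obtain \<phi> where "\<phi> \<in> hom F G" "\<rho> = restrict \<phi> K" using \<rho> by blast
    then show "\<rho> \<in> extensional K" "\<rho> ` K \<subseteq> carrier G"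
      using K_subset hom_in_carrier[of \<phi>] by auto
  qed
  have "card H dvd (\<Sum>\<rho>\<in>?R. card (centralizer (\<rho> ` K)))"
  proof (rule card_dvd_sum_invariant_weights[OF H finite_subset[OF Hc fin]])
    show "finite ?R" using True by simp
    show "conjugate_on_K n \<rho> \<in> ?R" if "n \<in> H" "\<rho> \<in> ?R" for n \<rho>
    proof -
      obtain \<phi> where \<phi>: "\<phi> \<in> ?Hs" and \<rho>: "\<rho> = restrict \<phi> K" using \<open>\<rho> \<in> ?R\<close> by blast
      have "n \<in> carrier G" using \<open>n \<in> H\<close> Hc by auto
      then have "(\<lambda>f\<in>carrier F. conjugate n (\<phi> f)) \<in> ?Hs"
        unfolding mem_Collect_eq restrict_conjugate_comp
        using \<phi> invariant \<open>n \<in> H\<close> conjugate_comp_hom by auto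
      then show ?thesis unfolding \<rho> by (rule rev_image_eqI) (rule restrict_conjugate_comp[symmetric])
    qed
    show "conjugate_on_K \<one> \<rho> = \<rho>" if "\<rho> \<in> ?R" for \<rho>
      using R[OF that] unfolding conjugate_on_K_def extensional_def by (auto simp: restrict_def fun_eq_iff)
    show "conjugate_on_K (n \<otimes> m) \<rho> = conjugate_on_K n (conjugate_on_K m \<rho>)"
      if "n \<in> H" "m \<in> H" "\<rho> \<in> ?R" for n m \<rho>
      using R[OF that(3)] that(1,2) Hc unfolding conjugate_on_K_def
      by (auto simp: restrict_def fun_eq_iff conjugate_mult subset_iff image_subset_iff)
    show "card (centralizer (conjugate_on_K n \<rho> ` K)) = card (centralizer (\<rho> ` K))"
      if "n \<in> H" "\<rho> \<in> ?R" for n \<rho>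
    proof -
      have "conjugate_on_K n \<rho> ` K = conjugate n ` \<rho> ` K"
        unfolding conjugate_on_K_def by auto
      then show ?thesis using card_centralizer_conjugate_image[of n "\<rho> ` K"] R[OF that(2)] that(1) Hc
        by auto
    qed
    show "card {n \<in> H. conjugate_on_K n \<rho> = \<rho>} dvd card (centralizer (\<rho> ` K))" if "\<rho> \<in> ?R" for \<rho>
      unfolding stabilizer_conjugate_on_K[OF H R[OF that]]
      using card_subgroup_dvd subgroups_Inter_pair[OF H] centralizer_subgroup R[OF that] by auto
  qed
  then show ?thesis by (simp only: card_homs_eq_sum_centralizers[OF True])
qed simp \<comment> \<open>an infinite set has cardinality 0\<close>

lemma card_dvd_card_homs_injective_on:
  assumes H: "subgroup H G" and fin: "finite (carrier G)" and W: "W \<subseteq> K"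
    and invariant: "\<And>n B. n \<in> H \<Longrightarrow> B \<subseteq> carrier G \<Longrightarrow> Q B \<Longrightarrow> Q (conjugate n ` B)"
  shows "card H dvd card {\<phi> \<in> hom F G. \<phi> \<in> extensional (carrier F) \<and> inj_on \<phi> W \<and> Q (\<phi> ` W)}"
proof -
  have restrict_W: "inj_on (restrict \<rho> K) W = inj_on \<rho> W" "restrict \<rho> K ` W = \<rho> ` W" for \<rho> :: "'f \<Rightarrow> 'a"
    using W by (auto intro!: inj_on_cong)
  have "card H dvd card {\<phi> \<in> hom F G. \<phi> \<in> extensional (carrier F) \<and>
      (\<lambda>\<rho>. inj_on \<rho> W \<and> Q (\<rho> ` W)) (restrict \<phi> K)}"
  proof (rule card_dvd_card_homs[OF H fin])
    fix \<phi> n assume \<phi>: "\<phi> \<in> hom F G" and P: "inj_on (restrict \<phi> K) W \<and> Q (restrict \<phi> K ` W)"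
      and n: "n \<in> H"
    have nc: "n \<in> carrier G" using n subgroup.subset[OF H] by auto
    have \<phi>W: "\<phi> ` W \<subseteq> carrier G" using W K_subset hom_in_carrier[OF \<phi>] by auto
    have "conjugate_on_K n (restrict \<phi> K) = restrict (conjugate n \<circ> \<phi>) K"
      unfolding conjugate_on_K_def by auto
    moreover have "inj_on (conjugate n \<circ> \<phi>) W"
      using P restrict_W inj_on_subset[OF inj_on_conjugate[OF nc] \<phi>W] by (simp add: comp_inj_on)
    moreover have "Q ((conjugate n \<circ> \<phi>) ` W)"
      using P restrict_W invariant[OF n \<phi>W] by (simp add: image_comp)
    ultimately show "inj_on (conjugate_on_K n (restrict \<phi> K)) W \<and> Q (conjugate_on_K n (restrict \<phi> K) ` W)"
      using restrict_W by simp
  qed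
  then show ?thesis using restrict_W by simp
qed

end

theorem mainTheorem7:
  fixes G :: "('g, 'c) monoid_scheme" and F :: "('f, 'd) monoid_scheme"
  assumes "group G" and "finite (carrier G)"
    and "subgroup A G"
    and "finitely_generated_group F"
    and "subgroup W F"
    and "infinite (rcosets\<^bsub>F\<^esub> (W <#>\<^bsub>F\<^esub> derived F (carrier F)))"
  shows "card (normalizer G A) dvd
           card {\<phi> \<in> hom F G. \<phi> \<in> extensional (carrier F) \<and> inj_on \<phi> W \<and> \<phi> ` W \<subseteq> A} \<and>
         card (normalizer G A) dvd
           card {\<phi> \<in> hom F G. \<phi> \<in> extensional (carrier F) \<and> inj_on \<phi> W \<and> \<phi> ` W = A}"
proof -
  interpret G: group G by fact
  interpret F: group F using assms(4) unfolding finitely_generated_group_def by blast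
  obtain \<psi> t where \<psi>: "F.additive_on (carrier F) \<psi>" and W0: "\<forall>w\<in>W. \<psi> w = 0"
    and t: "t \<in> carrier F" "\<psi> t = 1"
    using finitely_generated_group_int_hom[OF assms(4-6)] by blast
  interpret int_split G F \<psi> t by unfold_locales (use \<psi> t in auto)
  have WK: "W \<subseteq> K" using W0 subgroup.subset[OF assms(5)] unfolding K_def by auto
  have NA: "subgroup (normalizer G A) G"
    using G.normalizer_imp_subgroup[OF subgroup.subset[OF assms(3)]] .
  have conj_A: "G.conjugate n ` A = A" if "n \<in> normalizer G A" for n
    using G.conjugate_image_normalizer[OF subgroup.subset[OF assms(3)] that] .
  then have "G.conjugate n ` B \<subseteq> A" if "n \<in> normalizer G A" "B \<subseteq> A" for n B
    using that by blast
  then show ?thesis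
    using card_dvd_card_homs_injective_on[OF NA assms(2) WK, where Q = "\<lambda>B. B \<subseteq> A"]
      card_dvd_card_homs_injective_on[OF NA assms(2) WK, where Q = "\<lambda>B. B = A"] conj_A
    by simp
qed

end
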